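(* Let $(\mathbb{X},d,\mu)$ be a proper metric measure space satisfying the $\delta$-annular decay property for some $\delta\in(0,1]$ with constant $D_\delta\geq1$. Let $\varrho$ be a continuous admissible radius function in a bounded domain $\Omega\subset\mathbb{X}$. Then there is $C=C(D_\delta,\mu)>0$ such that for every compact $K\subset\Omega$ and all $x,y\in K$, $$\frac{\mu(B_x\triangle B_y)}{\max\{\mu(B_x),\mu(B_y)\}}\leq C\left(\frac{\widehat\omega_\varrho(d(x,y))}{\varrho_K}\right)^\delta.$$
   Context: A metric space is proper if closed bounded sets are compact. A metric measure space $(\mathbb{X},d,\mu)$ is a metric space with a positive Borel regular measure $\mu$ with $0<\mu(B)<\infty$ for every ball $B$. It satisfies the $\delta$-annular decay property if there is $D_\delta\ge1$ with $\mu(B(x,R)\setminus B(x,r))\leq D_\delta\left(\frac{R-r}{R}\right)^\delta\mu(B(x,R))$ for all $x$, $0<r\leq R$. An admissible radius function in $\Omega$ is $\varrho\in C(\overline\Omega)$, $\varrho\ge0$, with $0<\varrho(x)\leq\mathrm{dist}(x,\partial\Omega)$ for $x\in\Omega$ and $\varrho=0$ exactly on $\partial\Omega$. $\varrho_K=\inf_K\varrho$, $B_x=\overline{B}(x,\varrho(x))$, $A\triangle B=(A\setminus B)\cup(B\setminus A)$. A modulus of continuity is a nondecreasing continuous $\omega:[0,\mathrm{diam}\,\Omega]\to[0,\infty)$ with $\omega(0)=0$. Fix a concave modulus of continuity $\omega_{\varrho,\Omega}$ for $\varrho$ on $\Omega$ with $\omega_{\varrho,\Omega}(\mathrm{diam}\,\Omega)\le\mathrm{diam}\,\Omega$;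 set $\widehat\omega_\varrho(t)=t$ if $\omega_{\varrho,\Omega}(t)\le t$ for all $t\in[0,\mathrm{diam}\,\Omega]$, and otherwise $\widehat\omega_\varrho(t)=\frac{\mathrm{diam}\,\Omega}{\omega_{\varrho,\Omega}(\mathrm{diam}\,\Omega)}\omega_{\varrho,\Omega}(t)$. *)

theory Defs
  imports "HOL-Analysis.Analysis"
begin

definition proper_space :: "'a::metric_space itself \<Rightarrow> bool" where
  "proper_space _ \<longleftrightarrow> (\<forall>S::'a set. closed S \<and> bounded S \<longrightarrow> compact S)"

definition mm_space :: "'a::metric_space measure \<Rightarrow> bool" where
  "mm_space \<mu> \<longleftrightarrow> sets \<mu> = sets borel \<and>
     (\<forall>x r. 0 < r \<longrightarrow> 0 < emeasure \<mu> (ball x r) \<and> emeasure \<mu> (ball x r) < \<infinity>) \<and>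
     (\<forall>x r. 0 < r \<longrightarrow> 0 < emeasure \<mu> (cball x r) \<and> emeasure \<mu> (cball x r) < \<infinity>)"

definition annular_decay :: "'a::metric_space measure \<Rightarrow> real \<Rightarrow> real \<Rightarrow> bool" where
  "annular_decay \<mu> \<delta> D \<longleftrightarrow> D \<ge> 1 \<and>
     (\<forall>x r R. 0 < r \<and> r \<le> R \<longrightarrow>
        measure \<mu> (ball x R - ball x r) \<le> D * ((R - r) / R) powr \<delta> * measure \<mu> (ball x R))"

definition domain :: "'a::metric_space set \<Rightarrow> bool" where
  "domain \<Omega> \<longleftrightarrow> open \<Omega> \<and> connected \<Omega> \<and> \<Omega> \<noteq> {}"

definition admissible_radius :: "'a::metric_space set \<Rightarrow> ('a \<Rightarrow> real) \<Rightarrow> bool" where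
  "admissible_radius \<Omega> \<rho> \<longleftrightarrow> continuous_on (closure \<Omega>) \<rho> \<and>
     (\<forall>x\<in>closure \<Omega>. \<rho> x \<ge> 0) \<and>
     (\<forall>x\<in>\<Omega>. 0 < \<rho> x \<and> \<rho> x \<le> infdist x (frontier \<Omega>)) \<and>
     (\<forall>x\<in>closure \<Omega>. \<rho> x = 0 \<longleftrightarrow> x \<in> frontier \<Omega>)"

definition modulus_of_continuity :: "'a::metric_space set \<Rightarrow> (real \<Rightarrow> real) \<Rightarrow> bool" where
  "modulus_of_continuity \<Omega> \<omega> \<longleftrightarrow>
     mono_on {0..diameter \<Omega>} \<omega> \<and> continuous_on {0..diameter \<Omega>} \<omega> \<and>
     (\<forall>t\<in>{0..diameter \<Omega>}. \<omega> t \<ge> 0) \<and> \<omega> 0 = 0"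

definition modulus_for :: "'a::metric_space set \<Rightarrow> ('a \<Rightarrow> real) \<Rightarrow> (real \<Rightarrow> real) \<Rightarrow> bool" where
  "modulus_for \<Omega> \<rho> \<omega> \<longleftrightarrow> modulus_of_continuity \<Omega> \<omega> \<and>
     (\<forall>x\<in>\<Omega>. \<forall>y\<in>\<Omega>. \<bar>\<rho> x - \<rho> y\<bar> \<le> \<omega> (dist x y))"

definition omega_hat :: "'a::metric_space set \<Rightarrow> (real \<Rightarrow> real) \<Rightarrow> real \<Rightarrow> real" where
  "omega_hat \<Omega> \<omega> t =
     (if (\<forall>s\<in>{0..diameter \<Omega>}. \<omega> s \<le> s) then t
      else diameter \<Omega> / \<omega> (diameter \<Omega>) * \<omega> t)"

definition symdiff :: "'a set \<Rightarrow> 'a set \<Rightarrow> 'a set" where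
  "symdiff A B = (A - B) \<union> (B - A)"

end

theory Submission
  imports Defs
begin

(* If d(x,y) <= L and |r - s| <= L, the symmetric difference of B(x,r) and B(y,s) lies in the
   annulus B(x, r + 3L) - B(x, r - 2L), whose measure annular decay bounds by D (5L/r)^delta times
   that of B(x, r + 3L); for L small compared to r, annular decay also gives
   mu(B(x, r + 3L)) <= 2 mu(B(x,r)). For larger L the trivial bound by twice the larger ball
   suffices. Concavity of omega makes the normalised modulus dominate both d(x,y) and
   omega(d(x,y)) >= |rho(x) - rho(y)|, so it serves as L, with rho_K bounding the radii below. *)

lemma mm_space_sets: "mm_space \<mu> \<Longrightarrow> sets \<mu> = sets borel"
  by (simp add: mm_space_def)

lemma mm_space_ball_fmeasurable: "mm_space \<mu> \<Longrightarrow> 0 < r \<Longrightarrow> ball x r \<in> fmeasurable \<mu>"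
  by (auto simp: mm_space_def intro!: fmeasurableI)

lemma mm_space_cball_fmeasurable: "mm_space \<mu> \<Longrightarrow> 0 < r \<Longrightarrow> cball x r \<in> fmeasurable \<mu>"
  by (auto simp: mm_space_def intro!: fmeasurableI)

lemma mm_space_measure_cball_pos: "mm_space \<mu> \<Longrightarrow> 0 < r \<Longrightarrow> 0 < measure \<mu> (cball x r)"
  unfolding measure_def by (simp add: mm_space_def enn2real_positive_iff)

lemma symdiff_cball_subset_annulus:
  fixes x y :: "'a::metric_space"
  assumes "0 < L" "dist x y \<le> L" "\<bar>r - s\<bar> \<le> L"
  shows "symdiff (cball x r) (cball y s) \<subseteq> ball x (r + 3 * L) - ball x (r - 2 * L)"
proof
  fix z assume z: "z \<in> symdiff (cball x r) (cball y s)"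
  have xz: "dist x z \<le> dist x y + dist y z" and yz: "dist y z \<le> dist x y + dist x z"
    by (metis dist_triangle dist_commute)+
  have "dist x z < r + 3 * L" using z xz assms by (auto simp: symdiff_def dist_commute)
  moreover have "\<not> dist x z < r - 2 * L"
  proof
    assume "dist x z < r - 2 * L"
    then have "dist x z \<le> r" "dist y z \<le> s" using yz assms by (auto simp: dist_commute)
    then show False using z by (auto simp: symdiff_def)
  qed
  ultimately show "z \<in> ball x (r + 3 * L) - ball x (r - 2 * L)" by simp
qed

lemma measure_ball_le_double_if_annulus_small:
  assumes mm: "mm_space \<mu>" and ad: "annular_decay \<mu> \<delta> D"
    and r: "0 < r" "r \<le> R" and small: "D * ((R - r) / R) powr \<delta> \<le> 1/2"
  shows "measure \<mu> (ball x R) \<le> 2 * measure \<mu> (ball x r)"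
proof -
  have "measure \<mu> (ball x R) - measure \<mu> (ball x r) = measure \<mu> (ball x R - ball x r)"
    using mm_space_ball_fmeasurable[OF mm, of R x] mm_space_ball_fmeasurable[OF mm, of r x] r
    by (intro measure_Diff[symmetric]) (auto simp: fmeasurable_def)
  also have "\<dots> \<le> D * ((R - r) / R) powr \<delta> * measure \<mu> (ball x R)"
    using ad r by (simp add: annular_decay_def)
  also have "\<dots> \<le> 1/2 * measure \<mu> (ball x R)"
    using small by (intro mult_right_mono) auto
  finally show ?thesis by simp
qed

lemma measure_symdiff_cball_le_annular:
  fixes \<mu> :: "'a::metric_space measure"
  assumes mm: "mm_space \<mu>" and ad: "annular_decay \<mu> \<delta> D" and "0 < \<delta>"
    and L: "0 < L" "dist x y \<le> L" "\<bar>r - s\<bar> \<le> L" "4 * L \<le> r"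
    and small: "D * (3 * L / r) powr \<delta> \<le> 1/2"
  shows "measure \<mu> (symdiff (cball x r) (cball y s))
           \<le> 2 * D * (5 * L / r) powr \<delta> * measure \<mu> (cball x r)"
proof -
  define a b where "a = r - 2 * L" and "b = r + 3 * L"
  have "0 < a" "a \<le> b" "0 < r" "r \<le> b" using L by (simp_all add: a_def b_def)
  have D: "1 \<le> D" using ad by (simp add: annular_decay_def)
  have doubling: "measure \<mu> (ball x b) \<le> 2 * measure \<mu> (ball x r)"
  proof (rule measure_ball_le_double_if_annulus_small[OF mm ad \<open>0 < r\<close> \<open>r \<le> b\<close>])
    have "(b - r) / b \<le> 3 * L / r" using L \<open>r \<le> b\<close> by (simp add: b_def frac_le)
    then have "((b - r) / b) powr \<delta> \<le> (3 * L / r) powr \<delta>"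
      using \<open>0 < \<delta>\<close> \<open>r \<le> b\<close> \<open>0 < r\<close> by (intro powr_mono2) auto
    then show "D * ((b - r) / b) powr \<delta> \<le> 1/2"
      using small D by (meson mult_left_mono order_trans zero_le_one)
  qed
  have "(b - a) / b \<le> 5 * L / r" using L \<open>r \<le> b\<close> by (simp add: a_def b_def frac_le)
  then have ratio: "((b - a) / b) powr \<delta> \<le> (5 * L / r) powr \<delta>"
    using \<open>0 < \<delta>\<close> \<open>0 < a\<close> \<open>a \<le> b\<close> by (intro powr_mono2) auto
  have "measure \<mu> (symdiff (cball x r) (cball y s)) \<le> measure \<mu> (ball x b - ball x a)"
    using symdiff_cball_subset_annulus[OF L(1-3)] mm_space_ball_fmeasurable[OF mm, of b]
      \<open>0 < a\<close> \<open>a \<le> b\<close>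
    by (intro measure_mono_fmeasurable fmeasurable_Diff)
      (auto simp: mm_space_sets[OF mm] symdiff_def a_def b_def)
  also have "\<dots> \<le> D * ((b - a) / b) powr \<delta> * measure \<mu> (ball x b)"
    using ad \<open>0 < a\<close> \<open>a \<le> b\<close> by (simp add: annular_decay_def)
  also have "\<dots> \<le> D * (5 * L / r) powr \<delta> * (2 * measure \<mu> (ball x r))"
    using ratio doubling D by (intro mult_mono) auto
  also have "\<dots> \<le> D * (5 * L / r) powr \<delta> * (2 * measure \<mu> (cball x r))"
    using mm_space_cball_fmeasurable[OF mm \<open>0 < r\<close>] D
    by (intro mult_left_mono measure_mono_fmeasurable) (auto simp: mm_space_sets[OF mm])
  finally show ?thesis by simp
qed

lemma measure_symdiff_cball_le_twice_max:
  assumes mm: "mm_space \<mu>" and "0 < r" "0 < s"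
  shows "measure \<mu> (symdiff (cball x r) (cball y s))
           \<le> 2 * max (measure \<mu> (cball x r)) (measure \<mu> (cball y s))"
proof -
  have "measure \<mu> (symdiff (cball x r) (cball y s))
          \<le> measure \<mu> (cball x r - cball y s) + measure \<mu> (cball y s - cball x r)"
    unfolding symdiff_def by (intro measure_Un_le) (auto simp: mm_space_sets[OF mm])
  also have "\<dots> \<le> measure \<mu> (cball x r) + measure \<mu> (cball y s)"
    using mm_space_cball_fmeasurable[OF mm] assms(2,3)
    by (intro add_mono measure_mono_fmeasurable) (auto simp: mm_space_sets[OF mm])
  finally show ?thesis by simp
qed

text \<open>Below the threshold \<open>L < c m\<close> the annular estimate applies; the constant is the larger of
  the two bounds the cases give.\<close>

definition symdiff_threshold :: "real \<Rightarrow> real \<Rightarrow> real" where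
  "symdiff_threshold \<delta> D = min (1/4) ((1 / (2 * D)) powr (1 / \<delta>) / 3)"

definition symdiff_constant :: "real \<Rightarrow> real \<Rightarrow> real" where
  "symdiff_constant \<delta> D = max (2 * D * 5 powr \<delta>) (2 / symdiff_threshold \<delta> D powr \<delta>)"

lemma symdiff_threshold_pos: "1 \<le> D \<Longrightarrow> 0 < symdiff_threshold \<delta> D"
  by (simp add: symdiff_threshold_def)

lemma symdiff_constant_pos: "1 \<le> D \<Longrightarrow> 0 < symdiff_constant \<delta> D"
  using symdiff_threshold_pos[of D \<delta>] by (simp add: symdiff_constant_def less_max_iff_disj)

lemma below_symdiff_threshold:
  assumes "1 \<le> D" "0 < \<delta>" "0 < L" "0 < m" "m \<le> r" "L < symdiff_threshold \<delta> D * m"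
  shows "4 * L \<le> r" and "D * (3 * L / r) powr \<delta> \<le> 1/2"
proof -
  define q where "q = (1 / (2 * D)) powr (1 / \<delta>)"
  have "symdiff_threshold \<delta> D * m \<le> 1/4 * m" "symdiff_threshold \<delta> D * m \<le> q / 3 * m"
    using assms(4) by (intro mult_right_mono; simp add: symdiff_threshold_def q_def)+
  then have "L < m / 4" "3 * L < q * m" using assms(6) by auto
  then show "4 * L \<le> r" using assms(5) by simp
  have "3 * L / r \<le> q"
    using \<open>3 * L < q * m\<close> assms(4,5) mult_left_mono[OF assms(5), of q]
    by (simp add: q_def pos_divide_le_eq)
  then have "(3 * L / r) powr \<delta> \<le> q powr \<delta>" using assms(2-5) by (intro powr_mono2) auto
  also have "\<dots> = 1 / (2 * D)" using assms(1,2) by (simp add: q_def powr_powr)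
  finally show "D * (3 * L / r) powr \<delta> \<le> 1/2" using assms(1) by (simp add: field_simps)
qed

lemma normalized_measure_symdiff_cball_le:
  fixes \<mu> :: "'a::metric_space measure"
  assumes mm: "mm_space \<mu>" and ad: "annular_decay \<mu> \<delta> D" and "0 < \<delta>"
    and m: "0 < m" "m \<le> r" "m \<le> s" and L: "dist x y \<le> L" "\<bar>r - s\<bar> \<le> L"
  shows "measure \<mu> (symdiff (cball x r) (cball y s))
           / max (measure \<mu> (cball x r)) (measure \<mu> (cball y s))
         \<le> symdiff_constant \<delta> D * (L / m) powr \<delta>"
    (is "?S / ?M \<le> ?C * (L / m) powr \<delta>")
proof -
  have D: "1 \<le> D" using ad by (simp add: annular_decay_def)
  define c where "c = symdiff_threshold \<delta> D"
  have "0 < r" "0 < s" using m by auto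
  have "0 < ?M" using mm_space_measure_cball_pos[OF mm \<open>0 < r\<close>] by (simp add: less_max_iff_disj)
  consider "L = 0" | "0 < L" "L < c * m" | "c * m \<le> L" using L(1) zero_le_dist[of x y] by fastforce
  then show ?thesis
  proof cases
    case 1
    then have "x = y" "r = s" using L by auto
    then show ?thesis using 1 by (simp add: symdiff_def)
  next
    case 2
    note small = below_symdiff_threshold[OF D \<open>0 < \<delta>\<close> 2(1) m(1,2) 2(2)[unfolded c_def]]
    have "(5 * L / r) powr \<delta> \<le> (5 * (L / m)) powr \<delta>"
      using \<open>0 < \<delta>\<close> 2(1) m by (intro powr_mono2) (auto intro!: frac_le)
    also have "\<dots> = 5 powr \<delta> * (L / m) powr \<delta>" by (rule powr_mult)
    finally have ratio: "(5 * L / r) powr \<delta> \<le> 5 powr \<delta> * (L / m) powr \<delta>" .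
    have "?S \<le> 2 * D * (5 * L / r) powr \<delta> * measure \<mu> (cball x r)"
      using measure_symdiff_cball_le_annular[OF mm ad \<open>0 < \<delta>\<close> 2(1) L small] .
    also have "\<dots> \<le> 2 * D * (5 powr \<delta> * (L / m) powr \<delta>) * ?M"
      using ratio D by (intro mult_mono) auto
    finally have "?S / ?M \<le> 2 * D * 5 powr \<delta> * (L / m) powr \<delta>"
      using \<open>0 < ?M\<close> by (simp add: divide_le_eq mult.assoc)
    also have "\<dots> \<le> ?C * (L / m) powr \<delta>" by (intro mult_right_mono) (auto simp: symdiff_constant_def)
    finally show ?thesis .
  next
    case 3
    have "0 < c" using symdiff_threshold_pos[OF D] by (simp add: c_def)
    have "?S / ?M \<le> 2"
      using measure_symdiff_cball_le_twice_max[OF mm \<open>0 < r\<close> \<open>0 < s\<close>] \<open>0 < ?M\<close>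
      by (simp add: divide_le_eq)
    also have "\<dots> = 2 / c powr \<delta> * c powr \<delta>" using \<open>0 < c\<close> by simp
    also have "\<dots> \<le> 2 / c powr \<delta> * (L / m) powr \<delta>"
      using 3 \<open>0 < c\<close> \<open>0 < \<delta>\<close> m(1) by (intro mult_left_mono powr_mono2) (auto simp: field_simps)
    also have "\<dots> \<le> ?C * (L / m) powr \<delta>"
      by (intro mult_right_mono) (auto simp: symdiff_constant_def c_def)
    finally show ?thesis .
  qed
qed

lemma omega_hat_ge:
  fixes \<Omega> :: "'a::metric_space set"
  assumes moc: "modulus_of_continuity \<Omega> \<omega>" and cc: "concave_on {0..diameter \<Omega>} \<omega>"
    and wd: "\<omega> (diameter \<Omega>) \<le> diameter \<Omega>" and t: "0 \<le> t" "t \<le> diameter \<Omega>"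
  shows "t \<le> omega_hat \<Omega> \<omega> t" and "\<omega> t \<le> omega_hat \<Omega> \<omega> t"
proof -
  have w0: "\<omega> 0 = 0" and wt: "0 \<le> \<omega> t" using moc t by (auto simp: modulus_of_continuity_def)
  have "t \<le> omega_hat \<Omega> \<omega> t \<and> \<omega> t \<le> omega_hat \<Omega> \<omega> t"
  proof (cases "\<forall>s\<in>{0..diameter \<Omega>}. \<omega> s \<le> s")
    case True
    then show ?thesis using t by (simp add: omega_hat_def)
  next
    case False
    define a where "a = diameter \<Omega>"
    from False obtain s where s: "s \<in> {0..a}" "s < \<omega> s" by (auto simp: a_def not_le)
    have "\<omega> s \<le> \<omega> a" using moc s by (auto simp: modulus_of_continuity_def a_def intro: mono_onD)
    then have "0 < \<omega> a" using s by auto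
    have "0 < a" using s w0 by (cases "s = 0") auto
    have hat: "omega_hat \<Omega> \<omega> t = a / \<omega> a * \<omega> t"
      using False unfolding omega_hat_def a_def by (simp only: if_False)
    have "t / a * \<omega> a \<le> \<omega> t"
      using concave_onD_Icc'[of 0 a \<omega> t] cc t w0 by (simp add: a_def mult.commute)
    then have "t \<le> a / \<omega> a * \<omega> t"
      using \<open>0 < a\<close> \<open>0 < \<omega> a\<close> by (simp add: field_simps)
    moreover have "1 * \<omega> t \<le> a / \<omega> a * \<omega> t"
      using wd wt \<open>0 < \<omega> a\<close> by (intro mult_right_mono) (auto simp: a_def)
    ultimately show ?thesis using hat by simp
  qed
  then show "t \<le> omega_hat \<Omega> \<omega> t" "\<omega> t \<le> omega_hat \<Omega> \<omega> t" by auto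
qed

lemma INF_pos_compact:
  fixes f :: "'a::topological_space \<Rightarrow> real"
  assumes "compact K" "continuous_on K f" "\<forall>z\<in>K. 0 < f z" "x \<in> K"
  shows "0 < (INF z\<in>K. f z)" and "(INF z\<in>K. f z) \<le> f x"
proof -
  obtain z0 where z0: "z0 \<in> K" "\<And>z. z \<in> K \<Longrightarrow> f z0 \<le> f z"
    using continuous_attains_inf[OF assms(1)] assms(2,4) by blast
  moreover have "bdd_below (f ` K)" using z0 by (auto intro!: bdd_belowI2)
  ultimately have "(INF z\<in>K. f z) = f z0" by (intro antisym cINF_lower cINF_greatest) auto
  then show "0 < (INF z\<in>K. f z)" "(INF z\<in>K. f z) \<le> f x" using z0 assms(3,4) by auto
qed

theorem lemma3p8:
  fixes \<mu> :: "'a::metric_space measure" and \<delta> D :: real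
  assumes "proper_space TYPE('a)"
    and "mm_space \<mu>"
    and "0 < \<delta>" and "\<delta> \<le> 1"
    and "annular_decay \<mu> \<delta> D"
  shows "\<exists>C>0. \<forall>(\<Omega>::'a set) \<rho> \<omega>.
           domain \<Omega> \<and> bounded \<Omega> \<and> admissible_radius \<Omega> \<rho> \<and>
           modulus_for \<Omega> \<rho> \<omega> \<and> concave_on {0..diameter \<Omega>} \<omega> \<and>
           \<omega> (diameter \<Omega>) \<le> diameter \<Omega> \<longrightarrow>
           (\<forall>K. compact K \<and> K \<subseteq> \<Omega> \<longrightarrow>
              (\<forall>x\<in>K. \<forall>y\<in>K.
                 measure \<mu> (symdiff (cball x (\<rho> x)) (cball y (\<rho> y)))
                   / max (measure \<mu> (cball x (\<rho> x))) (measure \<mu> (cball y (\<rho> y)))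
                 \<le> C * (omega_hat \<Omega> \<omega> (dist x y) / (INF z\<in>K. \<rho> z)) powr \<delta>))"
proof (intro exI[of _ "symdiff_constant \<delta> D"] conjI allI impI ballI)
  show "0 < symdiff_constant \<delta> D"
    using assms(5) by (intro symdiff_constant_pos) (simp add: annular_decay_def)
next
  fix \<Omega> :: "'a set" and \<rho> \<omega> K x y
  assume \<Omega>: "domain \<Omega> \<and> bounded \<Omega> \<and> admissible_radius \<Omega> \<rho> \<and> modulus_for \<Omega> \<rho> \<omega> \<and>
      concave_on {0..diameter \<Omega>} \<omega> \<and> \<omega> (diameter \<Omega>) \<le> diameter \<Omega>"
    and K: "compact K \<and> K \<subseteq> \<Omega>" and "x \<in> K" "y \<in> K"
  have "continuous_on K \<rho>" "\<forall>z\<in>K. 0 < \<rho> z"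
    using \<Omega> K closure_subset by (auto simp: admissible_radius_def intro: continuous_on_subset)
  note inf_x = INF_pos_compact[OF _ this \<open>x \<in> K\<close>] and inf_y = INF_pos_compact[OF _ this \<open>y \<in> K\<close>]
  have "dist x y \<le> diameter \<Omega>" using \<Omega> K \<open>x \<in> K\<close> \<open>y \<in> K\<close> by (intro diameter_bounded_bound) auto
  have "\<bar>\<rho> x - \<rho> y\<bar> \<le> \<omega> (dist x y)" using \<Omega> K \<open>x \<in> K\<close> \<open>y \<in> K\<close> by (auto simp: modulus_for_def)
  with omega_hat_ge[of \<Omega> \<omega> "dist x y"] \<Omega> \<open>dist x y \<le> diameter \<Omega>\<close>
  have "dist x y \<le> omega_hat \<Omega> \<omega> (dist x y)" "\<bar>\<rho> x - \<rho> y\<bar> \<le> omega_hat \<Omega> \<omega> (dist x y)"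
    by (auto simp: modulus_for_def)
  then show "measure \<mu> (symdiff (cball x (\<rho> x)) (cball y (\<rho> y)))
      / max (measure \<mu> (cball x (\<rho> x))) (measure \<mu> (cball y (\<rho> y)))
      \<le> symdiff_constant \<delta> D * (omega_hat \<Omega> \<omega> (dist x y) / (INF z\<in>K. \<rho> z)) powr \<delta>"
    using K inf_x inf_y by (intro normalized_measure_symdiff_cball_le[OF assms(2,5,3)]) auto
qed

end
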